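(* Let $d\ge3$, $\alpha\in(0,1/2)$, $z\in(0,1)$, and for $\beta>0$ set $y=y(\beta)=-\beta^{-1}\log z$. Let $r_1,r_2$ be independent with distribution $\alpha\delta_{-1}+(1-2\alpha)\delta_0+\alpha\delta_1$, let $\rho_i(\sigma)=\frac{1+\sigma r_i}{2}$ for $\sigma=\pm1$, and $X_2=1-(1-e^{-\beta})\sum_{\tau\in\{\pm1\}}\rho_1(\tau)\rho_2(\tau)$. Then \[\lim_{\beta\to\infty}\log\mathbb{E}[X_2^y]=\log(1-2\alpha^2+2\alpha^2z).\]
   Context: $\delta_x$ denotes the point mass at $x$. *)

theory Defs
  imports Complex_Main
begin

definition rweight :: "real \<Rightarrow> real \<Rightarrow> real" where
  "rweight \<alpha> r = (if r = -1 \<or> r = 1 then \<alpha> else if r = 0 then 1 - 2*\<alpha> else 0)"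

definition rho :: "real \<Rightarrow> real \<Rightarrow> real" where
  "rho r \<sigma> = (1 + \<sigma> * r) / 2"

definition X2 :: "real \<Rightarrow> real \<Rightarrow> real \<Rightarrow> real" where
  "X2 \<beta> r1 r2 = 1 - (1 - exp (-\<beta>)) * (\<Sum>\<tau>\<in>{-1, 1::real}. rho r1 \<tau> * rho r2 \<tau>)"

definition yexp :: "real \<Rightarrow> real \<Rightarrow> real" where
  "yexp z \<beta> = - ln z / \<beta>"

definition EX2y :: "real \<Rightarrow> real \<Rightarrow> real \<Rightarrow> real" where
  "EX2y \<alpha> z \<beta> = (\<Sum>(r1, r2) \<in> {-1, 0, 1::real} \<times> {-1, 0, 1::real}.
      rweight \<alpha> r1 * rweight \<alpha> r2 * (X2 \<beta> r1 r2) powr (yexp z \<beta>))"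

end

theory Submission
  imports Defs
begin

text \<open>X2 equals exp(-\<beta>) when r1 = r2 = \<plusminus>1 (probability 2\<alpha>^2), 1 when r1 = -r2 = \<plusminus>1
  (probability 2\<alpha>^2), and (1 + exp(-\<beta>))/2 when r1 or r2 is 0 (probability 1 - 4\<alpha>^2).
  Since exp(-\<beta>) powr y = z exactly and y \<rightarrow> 0, the expectation tends to
  2\<alpha>^2 z + 2\<alpha>^2 + (1 - 4\<alpha>^2), which is positive, so the logarithm passes to the limit.\<close>

lemma X2_zero_left: "X2 \<beta> 0 r = (1 + exp (-\<beta>)) / 2"
  and X2_zero_right: "X2 \<beta> r 0 = (1 + exp (-\<beta>)) / 2"
  by (simp_all add: X2_def rho_def field_simps)

lemma X2_equal_signs: "X2 \<beta> 1 1 = exp (-\<beta>)" "X2 \<beta> (-1) (-1) = exp (-\<beta>)"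
  and X2_opposite_signs: "X2 \<beta> 1 (-1) = 1" "X2 \<beta> (-1) 1 = 1"
  by (simp_all add: X2_def rho_def field_simps)

lemma exp_powr_yexp:
  assumes "\<beta> \<noteq> 0" "0 < z"
  shows "exp (-\<beta>) powr yexp z \<beta> = z"
  using assms by (simp add: powr_def yexp_def)

lemma EX2y_closed_form:
  assumes "\<beta> \<noteq> 0" "0 < z"
  shows "EX2y \<alpha> z \<beta> =
    2*\<alpha>^2*z + 2*\<alpha>^2 + (1 - 4*\<alpha>^2) * ((1 + exp (-\<beta>)) / 2) powr yexp z \<beta>"
proof -
  have "EX2y \<alpha> z \<beta> = (\<Sum>r1\<in>{-1, 0, 1::real}. \<Sum>r2\<in>{-1, 0, 1::real}.
      rweight \<alpha> r1 * rweight \<alpha> r2 * X2 \<beta> r1 r2 powr yexp z \<beta>)"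
    unfolding EX2y_def by (simp add: sum.cartesian_product)
  also have "\<dots> = 2*\<alpha>^2*z + 2*\<alpha>^2 + (1 - 4*\<alpha>^2) * ((1 + exp (-\<beta>)) / 2) powr yexp z \<beta>"
    by (simp add: X2_zero_left X2_zero_right X2_equal_signs X2_opposite_signs
        exp_powr_yexp[OF assms] rweight_def algebra_simps power2_eq_square)
  finally show ?thesis .
qed

lemma yexp_tendsto_zero: "(yexp z \<longlongrightarrow> 0) at_top"
  unfolding yexp_def
  by (intro tendsto_divide_0[OF tendsto_const] filterlim_at_top_imp_at_infinity filterlim_ident)

lemma tendsto_half_one_plus_exp_powr_yexp:
  "((\<lambda>\<beta>. ((1 + exp (-\<beta>)) / 2) powr yexp z \<beta>) \<longlongrightarrow> 1) at_top"
proof -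
  have "((\<lambda>\<beta>::real. exp (-\<beta>)) \<longlongrightarrow> 0) at_top"
    by (intro filterlim_compose[OF exp_at_bot] filterlim_uminus_at_bot_at_top)
  then have "((\<lambda>\<beta>::real. (1 + exp (-\<beta>)) / 2) \<longlongrightarrow> (1 + 0) / 2) at_top"
    by (intro tendsto_intros) simp_all
  from tendsto_powr[OF this yexp_tendsto_zero] show ?thesis
    by simp
qed

lemma EX2y_tendsto:
  assumes "0 < z"
  shows "(EX2y \<alpha> z \<longlongrightarrow> 1 - 2*\<alpha>^2 + 2*\<alpha>^2*z) at_top"
proof -
  have "((\<lambda>\<beta>. 2*\<alpha>^2*z + 2*\<alpha>^2 + (1 - 4*\<alpha>^2) * ((1 + exp (-\<beta>)) / 2) powr yexp z \<beta>)
      \<longlongrightarrow> 2*\<alpha>^2*z + 2*\<alpha>^2 + (1 - 4*\<alpha>^2) * 1) at_top"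
    by (intro tendsto_intros tendsto_half_one_plus_exp_powr_yexp)
  moreover have "eventually (\<lambda>\<beta>. 2*\<alpha>^2*z + 2*\<alpha>^2 + (1 - 4*\<alpha>^2) *
      ((1 + exp (-\<beta>)) / 2) powr yexp z \<beta> = EX2y \<alpha> z \<beta>) at_top"
    using eventually_gt_at_top[of 0] by eventually_elim (simp add: EX2y_closed_form assms)
  ultimately show ?thesis
    by (rule Lim_transform_eventually[THEN tendsto_eq_rhs]) simp
qed

theorem lemma6p1:
  fixes d :: nat and \<alpha> z :: real
  assumes "d \<ge> 3" and "0 < \<alpha>" and "\<alpha> < 1/2" and "0 < z" and "z < 1"
  shows "((\<lambda>\<beta>. ln (EX2y \<alpha> z \<beta>)) \<longlongrightarrow> ln (1 - 2*\<alpha>^2 + 2*\<alpha>^2*z)) at_top"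
proof -
  have "\<alpha>^2 < 1/4"
    using power_strict_mono[of \<alpha> "1/2" 2] assms(2,3) by (simp add: power_divide)
  moreover have "0 < \<alpha>^2 * z"
    using assms(2,4) by simp
  ultimately have "1 - 2*\<alpha>^2 + 2*\<alpha>^2*z \<noteq> 0"
    by linarith
  with EX2y_tendsto[OF assms(4)] show ?thesis
    by (rule tendsto_ln)
qed

end
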